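(* Let $e\to H\to G\xrightarrow{q} K\to e$ be a short exact sequence of groups with $H\subset FCH(G)$ (i.e. $G$ is an FC-hypercentral extension of $K$). Then $G$ is FC-hypercentral if and only if $K$ is FC-hypercentral.
   Context: The FC-center $FC(G)$ is the subgroup of elements of $G$ with finite conjugacy class. The upper FC-central series $(F_\alpha)_\alpha$, indexed by ordinals, is defined by $F_0=\{e\}$, $F_{\beta+1}/F_\beta=FC(G/F_\beta)$, and $F_\alpha=\bigcup_{\beta<\alpha}F_\beta$ for limit ordinals $\alpha$. The FC-hypercenter is $FCH(G)=\bigcup_\alpha F_\alpha$, and $G$ is FC-hypercentral if $FCH(G)=G$. *)

theory Defs
  imports "HOL-Algebra.Algebra"
begin

definition FC_center :: "('a, 'b) monoid_scheme \<Rightarrow> 'a set" where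
  "FC_center G = {g \<in> carrier G.
     finite {h \<otimes>\<^bsub>G\<^esub> g \<otimes>\<^bsub>G\<^esub> inv\<^bsub>G\<^esub> h | h. h \<in> carrier G}}"

definition FC_succ :: "('a, 'b) monoid_scheme \<Rightarrow> 'a set \<Rightarrow> 'a set" where
  "FC_succ G N = {g \<in> carrier G. N #>\<^bsub>G\<^esub> g \<in> FC_center (G Mod N)}"

text \<open>The terms F_alpha (alpha an ordinal) of the upper FC-central series, described
  without ordinals: the least family containing F_0 = {e}, closed under the successor
  step and under unions of nonempty subfamilies (limit stages).\<close>
inductive_set FC_terms :: "('a, 'b) monoid_scheme \<Rightarrow> 'a set set" for G where
  base: "{\<one>\<^bsub>G\<^esub>} \<in> FC_terms G"
| succ: "N \<in> FC_terms G \<Longrightarrow> FC_succ G N \<in> FC_terms G"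
| lim: "(\<And>N. N \<in> S \<Longrightarrow> N \<in> FC_terms G) \<Longrightarrow> S \<noteq> {} \<Longrightarrow> \<Union>S \<in> FC_terms G"

definition FCH :: "('a, 'b) monoid_scheme \<Rightarrow> 'a set" where
  "FCH G = \<Union>(FC_terms G)"

definition FC_hypercentral :: "('a, 'b) monoid_scheme \<Rightarrow> bool" where
  "FC_hypercentral G \<longleftrightarrow> FCH G = carrier G"

end

theory Submission
  imports Defs "HOL-Library.Bourbaki_Witt_Fixpoint"
begin

text \<open>The
  surjection q maps conjugacy classes onto conjugacy classes, so it carries FC_succ G N into
  FC_succ K M whenever q ` N \<subseteq> M; inductively, every term of the series of G maps into
  FCH K. Conversely, if q\<inverse>(M) \<inter> carrier G \<subseteq> FCH G, the same finiteness argument shows that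
  the preimage of FC_succ K M lies in FC_succ G (FCH G) \<subseteq> FCH G; the induction starts
  because the preimage of the trivial subgroup is the kernel, which lies in FCH G by hypothesis.\<close>

lemma finite_image_factor:
  assumes "finite (f ` A)" and "\<And>x y. x \<in> A \<Longrightarrow> y \<in> A \<Longrightarrow> f x = f y \<Longrightarrow> g x = g y"
  shows "finite (g ` A)"
proof -
  have "g x = g (inv_into A f (f x))" if "x \<in> A" for x
  proof (rule assms(2)[OF that])
    show "inv_into A f (f x) \<in> A" "f x = f (inv_into A f (f x))"
      using that by (simp_all add: inv_into_into f_inv_into_f)
  qed
  then have "g ` A = (\<lambda>b. g (inv_into A f b)) ` f ` A"
    unfolding image_image by (rule image_cong[OF refl])
  then show ?thesis
    using assms(1) by simp
qed

lemma (in subgroup) rcos_eq_iff: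
  assumes "group G" "x \<in> carrier G" "y \<in> carrier G"
  shows "H #> x = H #> y \<longleftrightarrow> x \<otimes> inv y \<in> H"
proof
  assume "H #> x = H #> y"
  then show "x \<otimes> inv y \<in> H"
    using group.rcos_self[OF assms(1,2) subgroup_axioms] rcos_module_imp[OF assms(1,3)] by simp
next
  assume "x \<otimes> inv y \<in> H"
  then have "x \<in> H #> y"
    by (rule rcos_module_rev[OF assms(1,3,2)])
  then show "H #> x = H #> y"
    using group.repr_independence[OF assms(1) _ assms(3) subgroup_axioms] by simp
qed

definition conj_class :: "('a, 'b) monoid_scheme \<Rightarrow> 'a \<Rightarrow> 'a set" where
  "conj_class G g = (\<lambda>h. h \<otimes>\<^bsub>G\<^esub> g \<otimes>\<^bsub>G\<^esub> inv\<^bsub>G\<^esub> h) ` carrier G"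

lemma FC_center_iff: "g \<in> FC_center G \<longleftrightarrow> g \<in> carrier G \<and> finite (conj_class G g)"
  by (simp add: FC_center_def conj_class_def Setcompr_eq_image)

context group
begin

lemma conj_class_mult_subset:
  assumes "a \<in> carrier G" "b \<in> carrier G"
  shows "conj_class G (a \<otimes> b) \<subseteq> (\<lambda>(x, y). x \<otimes> y) ` (conj_class G a \<times> conj_class G b)"
proof
  fix z assume "z \<in> conj_class G (a \<otimes> b)"
  then obtain h where h: "h \<in> carrier G" and z: "z = h \<otimes> (a \<otimes> b) \<otimes> inv h"
    by (auto simp: conj_class_def)
  have "z = (h \<otimes> a \<otimes> inv h) \<otimes> (h \<otimes> b \<otimes> inv h)"
    using assms h by (simp add: z m_assoc inv_solve_left)
  moreover have "(h \<otimes> a \<otimes> inv h, h \<otimes> b \<otimes> inv h) \<in> conj_class G a \<times> conj_class G b"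
    using h by (auto simp: conj_class_def)
  ultimately show "z \<in> (\<lambda>(x, y). x \<otimes> y) ` (conj_class G a \<times> conj_class G b)"
    by force
qed

lemma conj_class_inv: "a \<in> carrier G \<Longrightarrow> conj_class G (inv a) = m_inv G ` conj_class G a"
  by (auto simp: conj_class_def image_image inv_mult_group m_assoc intro!: image_cong)

lemma conj_class_conj:
  assumes "a \<in> carrier G" "k \<in> carrier G"
  shows "conj_class G (k \<otimes> a \<otimes> inv k) \<subseteq> conj_class G a"
proof
  fix z assume "z \<in> conj_class G (k \<otimes> a \<otimes> inv k)"
  then obtain h where h: "h \<in> carrier G" and z: "z = h \<otimes> (k \<otimes> a \<otimes> inv k) \<otimes> inv h"
    by (auto simp: conj_class_def)
  have "z = (h \<otimes> k) \<otimes> a \<otimes> inv (h \<otimes> k)"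
    using assms h by (simp add: z inv_mult_group m_assoc)
  then show "z \<in> conj_class G a"
    using assms h by (auto simp: conj_class_def)
qed

lemma FC_center_normal: "FC_center G \<lhd> G"
proof (rule normal_invI)
  show "subgroup (FC_center G) G"
  proof (rule subgroupI)
    show "FC_center G \<subseteq> carrier G"
      by (auto simp: FC_center_iff)
    have "conj_class G \<one> = {\<one>}"
      by (force simp: conj_class_def)
    then have "\<one> \<in> FC_center G"
      by (simp add: FC_center_iff)
    then show "FC_center G \<noteq> {}"
      by blast
  next
    fix a assume "a \<in> FC_center G"
    then show "inv a \<in> FC_center G"
      by (simp add: FC_center_iff conj_class_inv)
  next
    fix a b assume "a \<in> FC_center G" "b \<in> FC_center G"
    then have a: "a \<in> carrier G" "finite (conj_class G a)"
      and b: "b \<in> carrier G" "finite (conj_class G b)"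
      by (simp_all add: FC_center_iff)
    have "finite (conj_class G (a \<otimes> b))"
      using conj_class_mult_subset[OF a(1) b(1)] finite_cartesian_product[OF a(2) b(2)]
      by (rule finite_subset[OF _ finite_imageI])
    then show "a \<otimes> b \<in> FC_center G"
      using a b by (simp add: FC_center_iff)
  qed
next
  fix x h assume x: "x \<in> carrier G" and "h \<in> FC_center G"
  then have h: "h \<in> carrier G" "finite (conj_class G h)"
    by (simp_all add: FC_center_iff)
  have "finite (conj_class G (x \<otimes> h \<otimes> inv x))"
    using conj_class_conj[OF h(1) x] h(2) by (rule finite_subset)
  then show "x \<otimes> h \<otimes> inv x \<in> FC_center G"
    using x h by (simp add: FC_center_iff)
qed

lemma normal_Union_chain:
  assumes "M \<noteq> {}" and normal: "\<And>N. N \<in> M \<Longrightarrow> N \<lhd> G"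
    and chain: "\<And>A B. A \<in> M \<Longrightarrow> B \<in> M \<Longrightarrow> A \<subseteq> B \<or> B \<subseteq> A"
  shows "\<Union>M \<lhd> G"
proof (rule normal_invI)
  have sub: "subgroup N G" if "N \<in> M" for N
    using normal[OF that] by (rule normal_imp_subgroup)
  show "subgroup (\<Union>M) G"
  proof (rule subgroupI)
    show "\<Union>M \<subseteq> carrier G"
      using sub subgroup.subset by (metis Sup_least)
    obtain N where "N \<in> M"
      using assms(1) by blast
    then show "\<Union>M \<noteq> {}"
      using sub subgroup.one_closed by blast
  next
    fix a assume "a \<in> \<Union>M"
    then obtain A where "A \<in> M" "a \<in> A"
      by blast
    then show "inv a \<in> \<Union>M"
      using sub subgroup.m_inv_closed by (metis UnionI)
  next
    fix a b assume "a \<in> \<Union>M" "b \<in> \<Union>M"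
    then obtain A B where A: "A \<in> M" "a \<in> A" and B: "B \<in> M" "b \<in> B"
      by blast
    show "a \<otimes> b \<in> \<Union>M"
    proof (cases "A \<subseteq> B")
      case True
      then have "a \<otimes> b \<in> B"
        using A B subgroup.m_closed[OF sub[OF B(1)]] by blast
      then show ?thesis
        using B(1) by blast
    next
      case False
      then have "a \<otimes> b \<in> A"
        using A B chain[OF A(1) B(1)] subgroup.m_closed[OF sub[OF A(1)]] by blast
      then show ?thesis
        using A(1) by blast
    qed
  qed
next
  fix x h assume "x \<in> carrier G" "h \<in> \<Union>M"
  then obtain N where "N \<in> M" "h \<in> N"
    by blast
  then show "x \<otimes> h \<otimes> inv x \<in> \<Union>M"
    using normal.inv_op_closed2[OF normal \<open>x \<in> carrier G\<close>] by blast
qed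

end

lemma (in group_hom) normal_vimage:
  assumes "N \<lhd> H"
  shows "h -` N \<inter> carrier G \<lhd> G"
proof -
  interpret N: normal N H by (rule assms)
  show ?thesis
  proof (rule G.normal_invI)
    show "subgroup (h -` N \<inter> carrier G) G"
    proof (rule G.subgroupI)
      have "\<one> \<in> h -` N \<inter> carrier G"
        by simp
      then show "h -` N \<inter> carrier G \<noteq> {}"
        by blast
    qed auto
  qed (simp add: N.inv_op_closed2)
qed

lemma (in group_hom) conj_class_image:
  assumes "h ` carrier G = carrier H" "g \<in> carrier G"
  shows "conj_class H (h g) = h ` conj_class G g"
  unfolding conj_class_def image_image using assms
  by (auto intro!: image_cong simp flip: assms(1))

context normal
begin

lemma FC_succ_eq_vimage: "FC_succ G H = (\<lambda>x. H #> x) -` FC_center (G Mod H) \<inter> carrier G"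
  by (auto simp: FC_succ_def)

lemma group_hom_Mod: "group_hom G (G Mod H) (\<lambda>x. H #> x)"
  by (simp add: group_hom_def group_hom_axioms_def is_group factorgroup_is_group r_coset_hom_Mod)

lemma FC_succ_normal: "FC_succ G H \<lhd> G"
  unfolding FC_succ_eq_vimage
  by (rule group_hom.normal_vimage[OF group_hom_Mod group.FC_center_normal[OF factorgroup_is_group]])

lemma subset_FC_succ: "H \<subseteq> FC_succ G H"
proof
  fix n assume n: "n \<in> H"
  have "subgroup (FC_center (G Mod H)) (G Mod H)"
    using group.FC_center_normal[OF factorgroup_is_group] by (rule normal_imp_subgroup)
  then have "H #> n \<in> FC_center (G Mod H)"
    using n by (simp add: rcos_const[OF is_group] subgroup.one_closed[of _ "G Mod H", simplified])
  then show "n \<in> FC_succ G H"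
    using n by (simp add: FC_succ_eq_vimage)
qed

lemma mem_FC_succ_iff:
  "g \<in> FC_succ G H \<longleftrightarrow> g \<in> carrier G \<and> finite ((\<lambda>x. H #> x) ` conj_class G g)"
proof -
  have "conj_class (G Mod H) (H #> g) = (\<lambda>x. H #> x) ` conj_class G g" if "g \<in> carrier G"
    using group_hom.conj_class_image[OF group_hom_Mod _ that] by (simp add: carrier_FactGroup)
  then show ?thesis
    by (auto simp: FC_succ_eq_vimage FC_center_iff carrier_FactGroup)
qed

end

text \<open>A union of normal subgroups need not be a subgroup, so normality of the limit terms
  of the series is not automatic. It holds because all terms lie in the Bourbaki-Witt tower of
  FC_succ G over the normal subgroups ordered by inclusion, which is a chain.\<close>

sublocale group \<subseteq> FC_tower: bourbaki_witt_fixpoint Union "{(A, B). A \<subseteq> B \<and> A \<lhd> G \<and> B \<lhd> G}" "FC_succ G"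
proof
  let ?leq = "{(A, B). A \<subseteq> B \<and> A \<lhd> G \<and> B \<lhd> G}"
  have Field: "Field ?leq = {N. N \<lhd> G}"
    by (auto simp: Field_def)
  have chain: "M \<in> Chains ?leq \<Longrightarrow> M \<noteq> {} \<Longrightarrow> \<Union>M \<lhd> G" for M
    by (rule normal_Union_chain) (auto simp: Chains_def)
  show "Partial_order ?leq"
    by (auto simp: Field partial_order_on_def preorder_on_def refl_on_def trans_def antisym_def)
  show "M \<in> Chains ?leq \<Longrightarrow> M \<noteq> {} \<Longrightarrow> (\<And>x. x \<in> M \<Longrightarrow> (x, z) \<in> ?leq) \<Longrightarrow> (\<Union>M, z) \<in> ?leq" for M z
    using chain by blast
  show "M \<in> Chains ?leq \<Longrightarrow> x \<in> M \<Longrightarrow> (x, \<Union>M) \<in> ?leq" for M x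
    using chain by (auto simp: Chains_def)
  show "M \<in> Chains ?leq \<Longrightarrow> M \<noteq> {} \<Longrightarrow> \<Union>M \<in> Field ?leq" for M
    using chain by (simp add: Field)
  show "N \<in> Field ?leq \<Longrightarrow> (N, FC_succ G N) \<in> ?leq" for N
    by (simp add: Field normal.subset_FC_succ normal.FC_succ_normal)
qed

context group
begin

lemma FC_terms_subset_tower: "FC_terms G \<subseteq> FC_tower.iterates_above {\<one>}"
proof
  have one: "{\<one>} \<in> Field {(A, B). A \<subseteq> B \<and> A \<lhd> G \<and> B \<lhd> G}"
    using one_is_normal by (auto simp: Field_def)
  fix N assume "N \<in> FC_terms G"
  then show "N \<in> FC_tower.iterates_above {\<one>}"
  proof (induction rule: FC_terms.induct)
    case base
    show ?case by (rule FC_tower.base)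
  next
    case (succ N)
    from succ.IH show ?case by (rule FC_tower.step)
  next
    case (lim S)
    have "S \<in> Chains {(A, B). A \<subseteq> B \<and> A \<lhd> G \<and> B \<lhd> G}"
      using FC_tower.chain_iterates_above[OF one] by (rule in_Chains_subset) (use lim.IH in blast)
    then show ?case
      using lim.hyps(2) lim.IH by (rule FC_tower.Sup)
  qed
qed

lemma FC_terms_normal: "N \<in> FC_terms G \<Longrightarrow> N \<lhd> G"
  using FC_tower.iterates_above_Field[of N "{\<one>}"] FC_terms_subset_tower one_is_normal
  by (auto simp: Field_def)

end

lemma FCH_in_FC_terms: "FCH G \<in> FC_terms G"
  unfolding FCH_def by (rule FC_terms.lim) (auto intro: FC_terms.base)

lemma FC_succ_FCH_subset: "FC_succ G (FCH G) \<subseteq> FCH G"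
  using FC_terms.succ[OF FCH_in_FC_terms] by (auto simp: FCH_def)

lemma (in group) FCH_normal: "FCH G \<lhd> G"
  by (rule FC_terms_normal[OF FCH_in_FC_terms])

lemma (in group) FC_hypercentral_iff: "FC_hypercentral G \<longleftrightarrow> carrier G \<subseteq> FCH G"
  using FCH_normal[THEN normal_imp_subgroup, THEN subgroup.subset]
  by (auto simp: FC_hypercentral_def)

context group_hom
begin

lemma FC_succ_image_subset:
  assumes surj: "h ` carrier G = carrier H"
    and N: "N \<lhd> G" and M: "M \<lhd> H" and NM: "h ` N \<subseteq> M"
  shows "h ` FC_succ G N \<subseteq> FC_succ H M"
proof
  fix y assume "y \<in> h ` FC_succ G N"
  then obtain g where y: "y = h g" and "g \<in> FC_succ G N"
    by blast
  then have g: "g \<in> carrier G" and fin: "finite ((\<lambda>x. N #>\<^bsub>G\<^esub> x) ` conj_class G g)"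
    by (simp_all add: normal.mem_FC_succ_iff[OF N])
  have coset_factor: "M #>\<^bsub>H\<^esub> h x = M #>\<^bsub>H\<^esub> h z"
    if x: "x \<in> carrier G" and z: "z \<in> carrier G" and eq: "N #>\<^bsub>G\<^esub> x = N #>\<^bsub>G\<^esub> z" for x z
  proof -
    have "x \<otimes>\<^bsub>G\<^esub> inv\<^bsub>G\<^esub> z \<in> N"
      using subgroup.rcos_eq_iff[OF normal_imp_subgroup[OF N] G.is_group x z] eq by blast
    then have "h (x \<otimes>\<^bsub>G\<^esub> inv\<^bsub>G\<^esub> z) \<in> M"
      using NM by blast
    then have "h x \<otimes>\<^bsub>H\<^esub> inv\<^bsub>H\<^esub> h z \<in> M"
      using x z by simp
    then show ?thesis
      using subgroup.rcos_eq_iff[OF normal_imp_subgroup[OF M] H.is_group] x z by simp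
  qed
  have "finite ((\<lambda>x. M #>\<^bsub>H\<^esub> h x) ` conj_class G g)"
  proof (rule finite_image_factor[OF fin])
    fix x z assume "x \<in> conj_class G g" "z \<in> conj_class G g"
      and "N #>\<^bsub>G\<^esub> x = N #>\<^bsub>G\<^esub> z"
    then show "M #>\<^bsub>H\<^esub> h x = M #>\<^bsub>H\<^esub> h z"
      using g by (intro coset_factor) (auto simp: conj_class_def)
  qed
  then show "y \<in> FC_succ H M"
    using g y by (simp add: normal.mem_FC_succ_iff[OF M] conj_class_image[OF surj g] image_image)
qed

lemma FC_succ_vimage_subset:
  assumes surj: "h ` carrier G = carrier H"
    and F: "F \<lhd> G" and M: "M \<lhd> H" and MF: "h -` M \<inter> carrier G \<subseteq> F"
  shows "h -` FC_succ H M \<inter> carrier G \<subseteq> FC_succ G F"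
proof
  fix g assume "g \<in> h -` FC_succ H M \<inter> carrier G"
  then have g: "g \<in> carrier G" and "h g \<in> FC_succ H M"
    by simp_all
  then have fin: "finite ((\<lambda>x. M #>\<^bsub>H\<^esub> h x) ` conj_class G g)"
    by (simp add: normal.mem_FC_succ_iff[OF M] conj_class_image[OF surj g] image_image)
  have coset_factor: "F #>\<^bsub>G\<^esub> x = F #>\<^bsub>G\<^esub> z"
    if x: "x \<in> carrier G" and z: "z \<in> carrier G" and eq: "M #>\<^bsub>H\<^esub> h x = M #>\<^bsub>H\<^esub> h z" for x z
  proof -
    have "h x \<otimes>\<^bsub>H\<^esub> inv\<^bsub>H\<^esub> h z \<in> M"
      using subgroup.rcos_eq_iff[OF normal_imp_subgroup[OF M] H.is_group] x z eq by simp
    then have "x \<otimes>\<^bsub>G\<^esub> inv\<^bsub>G\<^esub> z \<in> h -` M \<inter> carrier G"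
      using x z by simp
    then have "x \<otimes>\<^bsub>G\<^esub> inv\<^bsub>G\<^esub> z \<in> F"
      using MF by blast
    then show ?thesis
      using subgroup.rcos_eq_iff[OF normal_imp_subgroup[OF F] G.is_group x z] by blast
  qed
  have "finite ((\<lambda>x. F #>\<^bsub>G\<^esub> x) ` conj_class G g)"
  proof (rule finite_image_factor[OF fin])
    fix x z assume "x \<in> conj_class G g" "z \<in> conj_class G g"
      and "M #>\<^bsub>H\<^esub> h x = M #>\<^bsub>H\<^esub> h z"
    then show "F #>\<^bsub>G\<^esub> x = F #>\<^bsub>G\<^esub> z"
      using g by (intro coset_factor) (auto simp: conj_class_def)
  qed
  then show "g \<in> FC_succ G F"
    using g by (simp add: normal.mem_FC_succ_iff[OF F])
qed

lemma image_FCH_subset: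
  assumes surj: "h ` carrier G = carrier H"
  shows "h ` FCH G \<subseteq> FCH H"
proof -
  have "h ` N \<subseteq> FCH H" if "N \<in> FC_terms G" for N
    using that
  proof induction
    case base
    have "\<one>\<^bsub>H\<^esub> \<in> FCH H"
      by (rule H.FCH_normal[THEN normal_imp_subgroup, THEN subgroup.one_closed])
    then show ?case
      by simp
  next
    case (succ N)
    have "h ` FC_succ G N \<subseteq> FC_succ H (FCH H)"
      by (rule FC_succ_image_subset[OF surj G.FC_terms_normal[OF succ.hyps] H.FCH_normal succ.IH])
    then show ?case
      using FC_succ_FCH_subset by (rule order_trans)
  next
    case (lim S)
    then show ?case
      unfolding image_Union by blast
  qed
  then show ?thesis
    unfolding FCH_def image_Union by blast
qed

lemma FCH_vimage_subset:
  assumes surj: "h ` carrier G = carrier H" and ker: "kernel G H h \<subseteq> FCH G"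
  shows "h -` FCH H \<inter> carrier G \<subseteq> FCH G"
proof -
  have "h -` M \<inter> carrier G \<subseteq> FCH G" if "M \<in> FC_terms H" for M
    using that
  proof induction
    case base
    have "h -` {\<one>\<^bsub>H\<^esub>} \<inter> carrier G = kernel G H h"
      by (auto simp: kernel_def)
    then show ?case
      using ker by simp
  next
    case (succ M)
    have "h -` FC_succ H M \<inter> carrier G \<subseteq> FC_succ G (FCH G)"
      by (rule FC_succ_vimage_subset[OF surj G.FCH_normal H.FC_terms_normal[OF succ.hyps] succ.IH])
    then show ?case
      using FC_succ_FCH_subset by (rule order_trans)
  next
    case (lim S)
    then show ?case
      by blast
  qed
  then show ?thesis
    unfolding FCH_def by blast
qed

end

theorem proposition2p7:
  fixes G :: "('a, 'b) monoid_scheme" and K :: "('c, 'd) monoid_scheme"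
    and q :: "'a \<Rightarrow> 'c" and H :: "'a set"
  assumes "group G" and "group K"
    and "q \<in> hom G K" and "q ` carrier G = carrier K"
    and "kernel G K q = H"
    and "H \<subseteq> FCH G"
  shows "FC_hypercentral G \<longleftrightarrow> FC_hypercentral K"
proof -
  interpret group_hom G K q
    using assms(1-3) by (simp add: group_hom_def group_hom_axioms_def)
  show ?thesis
    unfolding G.FC_hypercentral_iff H.FC_hypercentral_iff
  proof
    assume "carrier G \<subseteq> FCH G"
    then have "q ` carrier G \<subseteq> q ` FCH G"
      by (rule image_mono)
    then show "carrier K \<subseteq> FCH K"
      using image_FCH_subset[OF assms(4)] assms(4) by simp
  next
    assume "carrier K \<subseteq> FCH K"
    then have "carrier G \<subseteq> q -` FCH K \<inter> carrier G"
      using hom_closed by blast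
    then show "carrier G \<subseteq> FCH G"
      using FCH_vimage_subset[OF assms(4)] assms(5,6) by blast
  qed
qed

end
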